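(* Let $\mathcal{A}=(a_i)_{i=1}^\infty$ be a weakly increasing sequence of positive integers, and let $u,v$ be positive real numbers with $u>v$. If $k\geq 2$ and $\gcd(a_1,\ldots,a_k)=1$, then $$p_\mathcal{A}(un,k)^2>p_\mathcal{A}(un+vn,k)\,p_\mathcal{A}(un-vn,k)$$ holds for every $n>\frac{4u}{kv^2}\prod_{i=1}^k(1+iDk)$ such that $un$, $un+vn$ and $un-vn$ are integers, where $D=\operatorname{lcm}(a_1,\ldots,a_k)$.
   Context: For a weakly increasing sequence $\mathcal{A}=(a_i)_{i\ge1}$ of positive integers and a positive integer $k$, the restricted partition function $p_\mathcal{A}(n,k)$ is defined by $\sum_{n\ge0}p_\mathcal{A}(n,k)x^n=\prod_{i=1}^k(1-x^{a_i})^{-1}$; equivalently, it counts the partitions of $n$ whose parts lie in the multiset $\{a_1,\ldots,a_k\}$ (equal values with different indices count as distinct colors). Also $p_\mathcal{A}(n,k)=0$ for $n<0$. *)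

theory Defs
  imports "HOL-Computational_Algebra.Formal_Power_Series"
begin

text \<open>Restricted partition function p_A(m,k): the m-th coefficient of
  prod_{i=1..k} (1 - x^(a_i))^(-1), and 0 for negative m.
  The sequence a is indexed from 1 (a 0 is irrelevant).\<close>
definition pA :: "(nat \<Rightarrow> nat) \<Rightarrow> int \<Rightarrow> nat \<Rightarrow> real" where
  "pA a m k = (if m < 0 then 0
     else fps_nth (\<Prod>i\<in>{1..k}. inverse (1 - (fps_X :: real fps) ^ a i)) (nat m))"

end

theory Submission
  imports Defs
begin

text \<open>
  Each factor \<open>1/(1 - x^a\<^sub>i)\<close> equals
  \<open>(1 + x^a\<^sub>i + \<dots> + x^(D - a\<^sub>i)) / (1 - x^D)\<close>, so the generating function is
  \<open>Q(x) / (1 - x^D)^k\<close> for a polynomial \<open>Q\<close> of degree less than \<open>kD\<close> with nonnegative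
  coefficients. Multiplying \<open>Q\<close> by \<open>1 - x^a\<^sub>i\<close> gives a multiple of \<open>1 - x^D\<close>, so the
  sums of the coefficients of \<open>Q\<close> over the residue classes modulo \<open>D\<close> are invariant under
  shifting the class by any \<open>a\<^sub>i\<close>; as the \<open>a\<^sub>i\<close> are coprime, they all equal one
  constant \<open>c \<ge> 1\<close>. Since the coefficient of \<open>x^(Dq)\<close> in \<open>(1 - x^D)^-k\<close> is
  \<open>(q + k - 1 choose k - 1)\<close>, this traps \<open>p(m)\<close> between \<open>c\<close> times the generalised
  binomial coefficients \<open>(m/D - 1 choose k - 1)\<close> and \<open>(m/D + k - 1 choose k - 1)\<close>.
  For \<open>m = un\<close> and \<open>r = vn\<close>, the square of the lower bound at \<open>m\<close> beats the product of
  the upper bounds at \<open>m \<plusminus> r\<close> factor by factor once \<open>kD(2m + kD) < r\<^sup>2\<close>, which is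
  what the threshold on \<open>n\<close> guarantees.
\<close>

unbundle fps_syntax

lemma one_minus_X_power_mult_sum:
  "(1 - fps_X ^ a) * (\<Sum>j<q. fps_X ^ (a * j)) = (1 - fps_X ^ (a * q) :: 'a::comm_ring_1 fps)"
  unfolding power_mult by (rule one_diff_power_eq[symmetric])

lemma mult_inverse_one_minus_X_power_nth:
  fixes f :: "'a::field fps"
  assumes "0 < D"
  shows "(f * inverse (1 - fps_X ^ D)) $ m =
           f $ m + (if D \<le> m then (f * inverse (1 - fps_X ^ D)) $ (m - D) else 0)"
proof -
  define g where "g = f * inverse (1 - fps_X ^ D)"
  have "g * (1 - fps_X ^ D) = f"
    using assms by (simp add: g_def mult.assoc inverse_mult_eq_1)
  then have "g = f + fps_X ^ D * g"
    by (simp add: algebra_simps)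
  then have "g $ m = f $ m + (fps_X ^ D * g) $ m"
    by (metis fps_add_nth)
  then show ?thesis
    by (simp add: fps_X_power_mult_nth g_def)
qed

lemma inverse_one_minus_X_power_power_nth:
  assumes D: "0 < D"
  shows "(inverse (1 - fps_X ^ D :: 'a::field_char_0 fps) ^ Suc K) $ m =
           (if D dvd m then of_nat (m div D + K choose K) else 0)"
proof -
  define W where "W = inverse (1 - fps_X ^ D :: 'a fps)"
  have rec: "(f * W) $ m = f $ m + (if D \<le> m then (f * W) $ (m - D) else 0)" for f m
    unfolding W_def by (rule mult_inverse_one_minus_X_power_nth[OF D])
  have dvd_iff: "D dvd (m - D) \<longleftrightarrow> D dvd m" if "D \<le> m" for m
    using that by (auto simp: dvd_minus_self)
  have "(W ^ Suc K) $ m = (if D dvd m then of_nat (m div D + K choose K) else 0)"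
  proof (induction K arbitrary: m)
    case 0
    show ?case
    proof (induction m rule: less_induct)
      case (less m)
      show ?case
        using rec[of 1 m] less[of "m - D"] dvd_iff[of m] D
        by (cases "D \<le> m"; cases "m = 0") (auto dest: dvd_imp_le)
    qed
  next
    case (Suc K)
    show ?case
    proof (induction m rule: less_induct)
      case (less m)
      have rec': "(W ^ Suc (Suc K)) $ m = (W ^ Suc K) $ m
                    + (if D \<le> m then (W ^ Suc (Suc K)) $ (m - D) else 0)"
        using rec[of "W ^ Suc K" m] by (simp only: power_Suc2[symmetric])
      show ?case
      proof (cases "D \<le> m")
        case False
        then show ?thesis
          using rec' Suc.IH[of m] by (auto dest: dvd_imp_le)
      next
        case True
        define q where "q = (m - D) div D"
        have q: "m div D = Suc q"
          unfolding q_def using le_div_geq[OF D True] .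
        have pascal: "Suc q + Suc K choose Suc K = (Suc q + K choose K) + (q + Suc K choose Suc K)"
          by simp
        show ?thesis
          using rec' Suc.IH[of m] less[of "m - D"] dvd_iff[of m] True D q q_def pascal by simp
      qed
    qed
  qed
  then show ?thesis
    unfolding W_def .
qed

lemma fps_prod_nth_0:
  "finite S \<Longrightarrow> (\<Prod>i\<in>S. f i :: 'a::comm_semiring_1 fps) $ 0 = (\<Prod>i\<in>S. f i $ 0)"
  by (induction S rule: finite_induct) auto

lemma fps_prod_nth_nonneg:
  fixes f :: "'i \<Rightarrow> 'a::linordered_semidom fps"
  assumes "finite S" and "\<And>i t. i \<in> S \<Longrightarrow> 0 \<le> f i $ t"
  shows "0 \<le> (\<Prod>i\<in>S. f i) $ t"
  using assms
  by (induction S arbitrary: t rule: finite_induct) (auto simp: fps_mult_nth intro!: sum_nonneg)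

definition fps_vanishes_from :: "nat \<Rightarrow> 'a::zero fps \<Rightarrow> bool" where
  "fps_vanishes_from B f \<longleftrightarrow> (\<forall>t\<ge>B. f $ t = 0)"

lemma fps_vanishes_from_mult:
  fixes f g :: "'a::semiring_0 fps"
  assumes f: "fps_vanishes_from A f" and g: "fps_vanishes_from B g"
  shows "fps_vanishes_from (A + B) (f * g)"
  unfolding fps_vanishes_from_def
proof (intro allI impI)
  fix t assume t: "A + B \<le> t"
  have "f $ i * g $ (t - i) = 0" for i
    using f g t unfolding fps_vanishes_from_def by (cases "A \<le> i") auto
  then show "(f * g) $ t = 0"
    by (simp add: fps_mult_nth)
qed

lemma fps_vanishes_from_prod:
  fixes f :: "'i \<Rightarrow> 'a::comm_semiring_1 fps"
  assumes "finite S" and "\<And>i. i \<in> S \<Longrightarrow> fps_vanishes_from B (f i)"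
  shows "fps_vanishes_from (card S * B + 1) (\<Prod>i\<in>S. f i)"
  using assms
proof (induction S rule: finite_induct)
  case empty
  then show ?case by (simp add: fps_vanishes_from_def)
next
  case (insert i S)
  then show ?case
    using fps_vanishes_from_mult[of B "f i" "card S * B + 1"] by (simp add: add.assoc)
qed

lemma fps_vanishes_from_X_power_mult:
  "fps_vanishes_from B f \<Longrightarrow> fps_vanishes_from (s + B) (fps_X ^ s * f)"
  by (auto simp: fps_vanishes_from_def fps_X_power_mult_nth)

lemma fps_vanishes_from_geometric:
  assumes "0 < a"
  shows "fps_vanishes_from (a * q) (\<Sum>j<q. fps_X ^ (a * j) :: 'a::comm_ring_1 fps)"
  unfolding fps_vanishes_from_def fps_sum_nth
proof (intro allI impI sum.neutral ballI)
  fix t j assume "a * q \<le> t" "j \<in> {..<q}"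
  then have "a * j < t"
    using assms by (metis lessThan_iff less_le_trans mult_less_mono2)
  then show "(fps_X ^ (a * j) :: 'a fps) $ t = 0"
    by simp
qed

definition residue_sum :: "nat \<Rightarrow> nat \<Rightarrow> 'a::comm_ring_1 fps \<Rightarrow> nat \<Rightarrow> 'a" where
  "residue_sum L D f j = (\<Sum>t\<le>L. if t mod D = j mod D then f $ t else 0)"

lemma residue_sum_eq_lessThan:
  assumes "fps_vanishes_from B f" and "B \<le> L + 1"
  shows "residue_sum L D f j = (\<Sum>t<B. if t mod D = j mod D then f $ t else 0)"
  unfolding residue_sum_def
  by (rule sum.mono_neutral_right) (use assms in \<open>auto simp: fps_vanishes_from_def\<close>)

lemma residue_sum_add_period: "residue_sum L D f (j + D) = residue_sum L D f j"
  by (simp add: residue_sum_def)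

lemma residue_sum_diff: "residue_sum L D (f - g) j = residue_sum L D f j - residue_sum L D g j"
  unfolding residue_sum_def sum_subtractf[symmetric] by (rule sum.cong) auto

lemma residue_sum_X_power_mult:
  assumes f: "fps_vanishes_from B f" and L: "s + B \<le> L + 1"
  shows "residue_sum L D (fps_X ^ s * f) (j + s) = residue_sum L D f j"
proof -
  let ?g = "\<lambda>t. if t mod D = (j + s) mod D then (fps_X ^ s * f) $ t else 0"
  have split: "(\<Sum>t<s + B. ?g t) = (\<Sum>t<s. ?g t) + (\<Sum>t<B. ?g (s + t))"
    by (induction B) (simp_all add: add.assoc)
  have "(s + t) mod D = (j + s) mod D \<longleftrightarrow> t mod D = j mod D" for t
    by (simp add: nat_mod_eq_iff)
  then have shifted: "?g (s + t) = (if t mod D = j mod D then f $ t else 0)" for t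
    by (simp add: fps_X_power_mult_nth)
  have "residue_sum L D (fps_X ^ s * f) (j + s) = (\<Sum>t<s + B. ?g t)"
    by (rule residue_sum_eq_lessThan[OF fps_vanishes_from_X_power_mult[OF f] L])
  also have "\<dots> = (\<Sum>t<B. if t mod D = j mod D then f $ t else 0)"
    unfolding split shifted by (simp add: sum.neutral fps_X_power_mult_nth)
  also have "\<dots> = residue_sum L D f j"
    using L by (intro residue_sum_eq_lessThan[OF f, symmetric]) simp
  finally show ?thesis .
qed

definition is_period :: "(nat \<Rightarrow> 'b) \<Rightarrow> nat \<Rightarrow> bool" where
  "is_period \<phi> s \<longleftrightarrow> (\<forall>j. \<phi> (j + s) = \<phi> j)"

lemma is_period_add: "is_period \<phi> s \<Longrightarrow> is_period \<phi> t \<Longrightarrow> is_period \<phi> (s + t)"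
  by (simp add: is_period_def add.assoc[symmetric])

lemma is_period_mult: "is_period \<phi> s \<Longrightarrow> is_period \<phi> (s * m)"
  by (induction m) (auto simp: is_period_def is_period_add[unfolded is_period_def] add.commute)

lemma is_period_diff:
  assumes "is_period \<phi> s" "is_period \<phi> t" "t \<le> s"
  shows "is_period \<phi> (s - t)"
  unfolding is_period_def
proof
  fix j
  have "\<phi> (j + (s - t)) = \<phi> (j + (s - t) + t)"
    using assms(2) by (simp add: is_period_def)
  also have "\<dots> = \<phi> j"
    using assms(1,3) by (simp add: is_period_def)
  finally show "\<phi> (j + (s - t)) = \<phi> j" .
qed

lemma is_period_gcd:
  assumes s: "is_period \<phi> s" and t: "is_period \<phi> t"
  shows "is_period \<phi> (gcd s t)"
proof (cases "s = 0")
  case True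
  then show ?thesis using t by simp
next
  case False
  then obtain x y where xy: "s * x = t * y + gcd s t"
    using bezout_nat by blast
  then have "is_period \<phi> (s * x - t * y)"
    by (intro is_period_diff is_period_mult s t) simp
  then show ?thesis
    using xy by simp
qed

lemma is_period_Gcd:
  assumes "finite A" and "\<And>s. s \<in> A \<Longrightarrow> is_period \<phi> s"
  shows "is_period \<phi> (Gcd A)"
  using assms
  by (induction A rule: finite_induct) (auto simp: is_period_gcd, simp add: is_period_def)

lemma gbinomial_real_nonneg:
  fixes x :: real
  assumes "real K - 1 \<le> x"
  shows "0 \<le> x gchoose K"
  unfolding gbinomial_prod_rev using assms by (intro divide_nonneg_pos prod_nonneg) auto

lemma gbinomial_real_mono:
  fixes x y :: real
  assumes "real K - 1 \<le> x" and "x \<le> y"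
  shows "x gchoose K \<le> y gchoose K"
  unfolding gbinomial_prod_rev using assms by (intro divide_right_mono prod_mono) auto

lemma gbinomial_product_less_square:
  fixes x y :: real
  assumes k: "2 \<le> k" and y: "0 < y" "y < x" and xk: "real k \<le> x"
    and gap: "real k * (2 * x + real k) < y\<^sup>2"
  shows "((x + y + real k - 1) gchoose (k - 1)) * ((x - y + real k - 1) gchoose (k - 1))
           < ((x - 1) gchoose (k - 1))\<^sup>2"
proof -
  define K where "K = k - 1"
  have kK: "real k = real K + 1" and K: "1 \<le> K"
    using k unfolding K_def by auto
  define f where "f i = (x + y + real K - real i) * (x - y + real K - real i)" for i
  define g where "g i = (x - 1 - real i)\<^sup>2" for i
  have fg: "0 \<le> f i \<and> f i < g i" and g_pos: "0 < g i" if "i < K" for i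
  proof -
    define s where "s = real K - real i"
    have s: "1 \<le> s" "s \<le> real K"
      using that unfolding s_def by auto
    have f: "f i = (x + s)\<^sup>2 - y\<^sup>2" and g: "g i = (x + s - real k)\<^sup>2"
      unfolding f_def g_def s_def kK by (simp_all add: power2_eq_square algebra_simps)
    have "(x + s)\<^sup>2 - (x + s - real k)\<^sup>2 = real k * (2 * x + 2 * s - real k)"
      by (simp add: power2_eq_square algebra_simps)
    also have "\<dots> \<le> real k * (2 * x + real k)"
      using s kK by (intro mult_left_mono) auto
    finally have "f i < g i"
      using f g gap by linarith
    moreover have "0 \<le> f i"
      unfolding f using power_mono[of y "x + s" 2] y s by simp
    ultimately show "0 \<le> f i \<and> f i < g i" by simp
    show "0 < g i"
      unfolding g using s xk kK by (intro zero_less_power) auto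
  qed
  have "(\<Prod>i=0..<K. f i) < (\<Prod>i=0..<K. g i)"
    by (rule prod_mono_strict[of 0]) (use K fg g_pos in \<open>auto intro: less_imp_le\<close>)
  then have "(\<Prod>i=0..<K. x + y + real K - real i) * (\<Prod>i=0..<K. x - y + real K - real i)
               < (\<Prod>i=0..<K. x - 1 - real i)\<^sup>2"
    unfolding f_def g_def by (simp add: prod.distrib prod_power_distrib)
  then have "(\<Prod>i=0..<K. x + y + real K - real i) * (\<Prod>i=0..<K. x - y + real K - real i)
               / (fact K * fact K) < (\<Prod>i=0..<K. x - 1 - real i)\<^sup>2 / (fact K * fact K)"
    by (intro divide_strict_right_mono) auto
  then show ?thesis
    unfolding gbinomial_prod_rev K_def[symmetric] kK by (simp add: power2_eq_square algebra_simps)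
qed

locale partition_weights =
  fixes a :: "nat \<Rightarrow> nat" and k :: nat
  assumes weights_pos: "\<And>i. i \<in> {1..k} \<Longrightarrow> 0 < a i"
    and Gcd_weights: "Gcd (a ` {1..k}) = 1"
    and k_pos: "1 \<le> k"
begin

definition D :: nat where
  "D = Lcm (a ` {1..k})"

definition partition_fps :: "real fps" where
  "partition_fps = (\<Prod>i\<in>{1..k}. inverse (1 - fps_X ^ a i))"

text \<open>\<open>factor i = (1 - x^D) / (1 - x^a\<^sub>i)\<close>, a polynomial because \<open>a\<^sub>i\<close> divides \<open>D\<close>.\<close>

definition factor :: "nat \<Rightarrow> real fps" where
  "factor i = (\<Sum>j<D div a i. fps_X ^ (a i * j))"

definition numerator :: "real fps" where
  "numerator = (\<Prod>i\<in>{1..k}. factor i)"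

text \<open>The numerator vanishes from degree \<open>kD + 1\<close> on; the truncation \<open>(k + 1) D\<close> leaves room
  for the shifts by \<open>a\<^sub>i\<close> and \<open>D\<close> made in the periodicity argument.\<close>

abbreviation residue_sum_numerator :: "nat \<Rightarrow> real" where
  "residue_sum_numerator \<equiv> residue_sum ((k + 1) * D) D numerator"

definition residue_mass :: real where
  "residue_mass = residue_sum_numerator 0"

lemma D_pos: "0 < D"
proof -
  have "0 \<notin> a ` {1..k}"
    using weights_pos by force
  then show ?thesis
    unfolding D_def by (simp add: Lcm_0_iff_nat flip: neq0_conv)
qed

lemma weight_dvd_D: "i \<in> {1..k} \<Longrightarrow> a i dvd D"
  unfolding D_def by (rule dvd_Lcm) simp

lemma weight_le_D: "i \<in> {1..k} \<Longrightarrow> a i \<le> D"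
  using weight_dvd_D D_pos by (rule dvd_imp_le)

lemma pA_int_eq_partition_fps_nth: "pA a (int m) k = partition_fps $ m"
  by (simp add: pA_def partition_fps_def)

lemma one_minus_X_weight_mult_factor:
  assumes "i \<in> {1..k}"
  shows "(1 - fps_X ^ a i) * factor i = 1 - fps_X ^ D"
  unfolding factor_def one_minus_X_power_mult_sum
  using weight_dvd_D[OF assms] by simp

lemma inverse_one_minus_X_weight:
  assumes i: "i \<in> {1..k}"
  shows "inverse (1 - fps_X ^ a i) = factor i * inverse (1 - fps_X ^ D)"
proof -
  have nz: "(1 - fps_X ^ a i :: real fps) $ 0 \<noteq> 0" "(1 - fps_X ^ D :: real fps) $ 0 \<noteq> 0"
    using weights_pos[OF i] D_pos by simp_all
  have "factor i * inverse (1 - fps_X ^ D)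
          = inverse (1 - fps_X ^ a i) * ((1 - fps_X ^ a i) * factor i) * inverse (1 - fps_X ^ D)"
    using nz by (simp add: inverse_mult_eq_1)
  also have "\<dots> = inverse (1 - fps_X ^ a i)"
    using nz by (simp add: one_minus_X_weight_mult_factor[OF i] mult.assoc inverse_mult_eq_1')
  finally show ?thesis ..
qed

lemma partition_fps_eq: "partition_fps = numerator * inverse (1 - fps_X ^ D) ^ k"
  unfolding partition_fps_def numerator_def
  by (simp add: inverse_one_minus_X_weight prod.distrib)

lemma numerator_nth_nonneg: "0 \<le> numerator $ t"
  unfolding numerator_def factor_def
  by (intro fps_prod_nth_nonneg) (auto simp: fps_sum_nth intro: sum_nonneg)

lemma numerator_nth_0: "numerator $ 0 = 1"
proof -
  have "factor i $ 0 = 1" if "i \<in> {1..k}" for i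
  proof -
    have "0 < D div a i"
      using weights_pos[OF that] weight_le_D[OF that] by (simp add: div_greater_zero_iff)
    moreover have "factor i $ 0 = (\<Sum>j<D div a i. if j = 0 then 1 else 0)"
      using weights_pos[OF that] by (simp add: factor_def fps_sum_nth)
    ultimately show ?thesis
      by simp
  qed
  then show ?thesis
    by (simp add: numerator_def fps_prod_nth_0)
qed

lemma factor_vanishes: "i \<in> {1..k} \<Longrightarrow> fps_vanishes_from D (factor i)"
  using fps_vanishes_from_geometric[OF weights_pos, of i "D div a i"] weight_dvd_D[of i]
  by (simp add: factor_def)

lemma numerator_vanishes: "fps_vanishes_from (k * D + 1) numerator"
  using fps_vanishes_from_prod[of "{1..k}" D factor] factor_vanishes
  by (simp add: numerator_def)

lemma residue_sum_numerator_add_weight: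
  assumes i: "i \<in> {1..k}"
  shows "residue_sum_numerator (j + a i) = residue_sum_numerator j"
proof -
  define L where "L = (k + 1) * D"
  define cofactor where "cofactor = (\<Prod>l\<in>{1..k} - {i}. factor l)"
  have numerator: "numerator = factor i * cofactor"
    unfolding numerator_def cofactor_def by (rule prod.remove[OF _ i]) simp
  have "numerator - fps_X ^ a i * numerator = (1 - fps_X ^ a i) * factor i * cofactor"
    unfolding numerator by (simp add: algebra_simps)
  also have "\<dots> = cofactor - fps_X ^ D * cofactor"
    unfolding one_minus_X_weight_mult_factor[OF i] by (simp add: algebra_simps)
  finally have shifts: "numerator - fps_X ^ a i * numerator = cofactor - fps_X ^ D * cofactor" .
  have "fps_vanishes_from ((k - 1) * D + 1) cofactor"
    using fps_vanishes_from_prod[of "{1..k} - {i}" D factor] factor_vanishes i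
    by (simp add: cofactor_def)
  then have "residue_sum L D (fps_X ^ D * cofactor) (j + a i + D) = residue_sum L D cofactor (j + a i)"
    by (rule residue_sum_X_power_mult) (use k_pos in \<open>simp add: L_def algebra_simps\<close>)
  moreover have "residue_sum L D (fps_X ^ a i * numerator) (j + a i) = residue_sum_numerator j"
    unfolding L_def
    by (rule residue_sum_X_power_mult[OF numerator_vanishes]) (use weight_le_D[OF i] in simp)
  ultimately show ?thesis
    using arg_cong[OF shifts, of "\<lambda>f. residue_sum L D f (j + a i)"]
    by (simp add: residue_sum_diff residue_sum_add_period L_def)
qed

lemma residue_sum_numerator_eq_mass: "residue_sum_numerator j = residue_mass"
proof -
  have "is_period residue_sum_numerator (Gcd (a ` {1..k}))"
    unfolding is_period_def using residue_sum_numerator_add_weight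
    by (intro is_period_Gcd[unfolded is_period_def]) auto
  then have "residue_sum_numerator (Suc j) = residue_sum_numerator j" for j
    unfolding Gcd_weights is_period_def by simp
  then show ?thesis
    unfolding residue_mass_def by (induction j) auto
qed

lemma residue_mass_ge_1: "1 \<le> residue_mass"
proof -
  have "numerator $ 0 \<le> residue_sum_numerator 0"
    unfolding residue_sum_def
    using member_le_sum[of 0 "{..(k + 1) * D}" "\<lambda>t. if t mod D = 0 mod D then numerator $ t else 0"]
    by (simp add: numerator_nth_nonneg)
  then show ?thesis
    by (simp add: residue_mass_def numerator_nth_0)
qed

lemma residue_sum_numerator_upto_le: "residue_sum m D numerator m \<le> residue_mass"
proof -
  have "residue_sum m D numerator m \<le> residue_sum (max m ((k + 1) * D)) D numerator m"
    unfolding residue_sum_def by (rule sum_mono2) (auto simp: numerator_nth_nonneg)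
  also have "\<dots> = residue_sum_numerator m"
    using residue_sum_eq_lessThan[OF numerator_vanishes] k_pos by (simp add: algebra_simps)
  finally show ?thesis
    unfolding residue_sum_numerator_eq_mass .
qed

lemma residue_sum_numerator_upto_eq:
  "k * D \<le> m \<Longrightarrow> residue_sum m D numerator m = residue_mass"
  using residue_sum_eq_lessThan[OF numerator_vanishes] residue_sum_numerator_eq_mass[of m]
  by (simp add: algebra_simps)

lemma inverse_one_minus_X_D_power_k_nth:
  "(inverse (1 - fps_X ^ D) ^ k :: real fps) $ n =
     (if D dvd n then (real (n div D) + real k - 1) gchoose (k - 1) else 0)"
proof -
  have binomial: "of_nat (n div D + (k - 1) choose (k - 1))
                    = (real (n div D) + real k - 1) gchoose (k - 1)"
    using k_pos by (simp add: binomial_gbinomial of_nat_diff)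
  have k: "Suc (k - 1) = k"
    using k_pos by simp
  show ?thesis
    using inverse_one_minus_X_power_power_nth[OF D_pos, of "k - 1" n, where 'a = real]
    unfolding binomial k .
qed

lemma partition_fps_nth:
  "partition_fps $ m = (\<Sum>t\<le>m. numerator $ t * (inverse (1 - fps_X ^ D) ^ k) $ (m - t))"
  by (simp add: partition_fps_eq fps_mult_nth atMost_atLeast0)

lemma partition_fps_nth_upper:
  "partition_fps $ m \<le> residue_mass * ((real m / real D + real k - 1) gchoose (k - 1))"
proof -
  let ?g = "(real m / real D + real k - 1) gchoose (k - 1)"
  have g_nonneg: "0 \<le> ?g"
    using k_pos by (intro gbinomial_real_nonneg) auto
  have "partition_fps $ m \<le> (\<Sum>t\<le>m. (if t mod D = m mod D then numerator $ t else 0) * ?g)"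
    unfolding partition_fps_nth
  proof (rule sum_mono)
    fix t assume "t \<in> {..m}"
    then have t: "t \<le> m" by simp
    show "numerator $ t * (inverse (1 - fps_X ^ D) ^ k) $ (m - t)
            \<le> (if t mod D = m mod D then numerator $ t else 0) * ?g"
    proof (cases "D dvd (m - t)")
      case True
      have "real ((m - t) div D) \<le> real m / real D"
        using True t D_pos by (simp add: real_of_nat_div divide_right_mono)
      then have "(real ((m - t) div D) + real k - 1) gchoose (k - 1) \<le> ?g"
        using k_pos by (intro gbinomial_real_mono) auto
      moreover have "t mod D = m mod D"
        using True mod_eq_dvd_iff_nat[OF t, of D] by simp
      ultimately show ?thesis
        using True numerator_nth_nonneg[of t]
        by (simp add: inverse_one_minus_X_D_power_k_nth mult_left_mono)
    qed (use numerator_nth_nonneg g_nonneg in \<open>simp add: inverse_one_minus_X_D_power_k_nth\<close>)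
  qed
  also have "\<dots> = residue_sum m D numerator m * ?g"
    by (simp add: residue_sum_def sum_distrib_right)
  also have "\<dots> \<le> residue_mass * ?g"
    using residue_sum_numerator_upto_le g_nonneg by (rule mult_right_mono)
  finally show ?thesis .
qed

lemma partition_fps_nth_lower:
  assumes m: "k * D \<le> m"
  shows "residue_mass * ((real m / real D - 1) gchoose (k - 1)) \<le> partition_fps $ m"
proof -
  let ?g = "(real m / real D - 1) gchoose (k - 1)"
  have k_le: "real k \<le> real m / real D"
    using m D_pos by (simp add: le_divide_eq flip: of_nat_mult)
  have "residue_mass * ?g = (\<Sum>t\<le>m. (if t mod D = m mod D then numerator $ t else 0) * ?g)"
    by (simp add: residue_sum_numerator_upto_eq[OF m, symmetric] residue_sum_def sum_distrib_right)
  also have "\<dots> \<le> partition_fps $ m"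
    unfolding partition_fps_nth
  proof (rule sum_mono)
    fix t assume "t \<in> {..m}"
    then have t: "t \<le> m" by simp
    show "(if t mod D = m mod D then numerator $ t else 0) * ?g
            \<le> numerator $ t * (inverse (1 - fps_X ^ D) ^ k) $ (m - t)"
    proof (cases "t mod D = m mod D \<and> t \<le> k * D")
      case True
      then have dvd: "D dvd (m - t)"
        using mod_eq_dvd_iff_nat[OF t, of D] by simp
      have "real t / real D \<le> real k"
        using True D_pos by (simp add: divide_le_eq flip: of_nat_mult)
      then have "real m / real D - real k \<le> real (m - t) / real D"
        using t by (simp add: diff_divide_distrib)
      then have "?g \<le> (real ((m - t) div D) + real k - 1) gchoose (k - 1)"
        using dvd k_le k_pos by (intro gbinomial_real_mono) (auto simp: real_of_nat_div)
      then show ?thesis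
        using True dvd numerator_nth_nonneg[of t]
        by (simp add: inverse_one_minus_X_D_power_k_nth mult_left_mono)
    next
      case False
      then show ?thesis
        using numerator_vanishes numerator_nth_nonneg[of t]
        by (auto simp: fps_vanishes_from_def inverse_one_minus_X_D_power_k_nth
            intro!: mult_nonneg_nonneg gbinomial_real_nonneg)
    qed
  qed
  finally show ?thesis .
qed

lemma partition_fps_nth_nonneg: "0 \<le> partition_fps $ m"
  unfolding partition_fps_nth inverse_one_minus_X_D_power_k_nth
  using k_pos numerator_nth_nonneg
  by (intro sum_nonneg mult_nonneg_nonneg) (auto intro: gbinomial_real_nonneg)

lemma partition_fps_nth_strict_log_concave:
  assumes k: "2 \<le> k" and r: "0 < r" "r < m" and m: "k * D \<le> m"
    and gap: "k * D * (2 * m + k * D) < r\<^sup>2"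
  shows "partition_fps $ (m + r) * partition_fps $ (m - r) < (partition_fps $ m)\<^sup>2"
proof -
  define x where "x = real m / real D"
  define y where "y = real r / real D"
  define b where "b z = (z + real k - 1) gchoose (k - 1)" for z
  have D: "0 < real D"
    using D_pos by simp
  have y: "0 < y" "y < x"
    using r D by (simp_all add: x_def y_def divide_strict_right_mono)
  have x: "real k \<le> x"
    using m D by (simp add: x_def le_divide_eq flip: of_nat_mult)
  have "real k * (2 * x + real k) = real (k * D * (2 * m + k * D)) / (real D)\<^sup>2"
    using D by (simp add: x_def field_simps power2_eq_square)
  also have "\<dots> < real (r\<^sup>2) / (real D)\<^sup>2"
    using D gap by (intro divide_strict_right_mono) (simp_all only: of_nat_less_iff zero_less_power)
  also have "\<dots> = y\<^sup>2"
    by (simp add: y_def power_divide)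
  finally have gap': "real k * (2 * x + real k) < y\<^sup>2" .
  have upper_plus: "partition_fps $ (m + r) \<le> residue_mass * b (x + y)"
    using partition_fps_nth_upper[of "m + r"] by (simp add: b_def x_def y_def add_divide_distrib)
  have upper_minus: "partition_fps $ (m - r) \<le> residue_mass * b (x - y)"
    using partition_fps_nth_upper[of "m - r"] r
    by (simp add: b_def x_def y_def diff_divide_distrib of_nat_diff)
  have lower: "residue_mass * ((x - 1) gchoose (k - 1)) \<le> partition_fps $ m"
    using partition_fps_nth_lower[OF m] by (simp add: x_def)
  have c: "0 < residue_mass"
    using residue_mass_ge_1 by simp
  have b_nonneg: "0 \<le> b (x + y)" "0 \<le> (x - 1) gchoose (k - 1)"
    unfolding b_def using x y k by (auto intro: gbinomial_real_nonneg)
  have "partition_fps $ (m + r) * partition_fps $ (m - r)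
          \<le> (residue_mass * b (x + y)) * (residue_mass * b (x - y))"
    using upper_plus upper_minus partition_fps_nth_nonneg c b_nonneg by (intro mult_mono) auto
  also have "\<dots> = residue_mass\<^sup>2 * (b (x + y) * b (x - y))"
    by (simp add: power2_eq_square algebra_simps)
  also have "\<dots> < residue_mass\<^sup>2 * ((x - 1) gchoose (k - 1))\<^sup>2"
    using gbinomial_product_less_square[OF k y x gap'] c by (simp add: b_def)
  also have "\<dots> = (residue_mass * ((x - 1) gchoose (k - 1)))\<^sup>2"
    by (simp add: power_mult_distrib)
  also have "\<dots> \<le> (partition_fps $ m)\<^sup>2"
    using lower c b_nonneg by (intro power_mono) auto
  finally show ?thesis .
qed

end

lemma factor_le_prod:
  fixes f :: "'i \<Rightarrow> 'a::linordered_semidom"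
  assumes "finite S" and "i \<in> S" and "\<And>j. j \<in> S \<Longrightarrow> 1 \<le> f j"
  shows "f i \<le> (\<Prod>j\<in>S. f j)"
proof -
  have "f i * 1 \<le> f i * (\<Prod>j\<in>S - {i}. f j)"
    using assms by (intro mult_left_mono prod_ge_1) (auto intro: order_trans[OF zero_le_one])
  then show ?thesis
    by (simp add: prod.remove[OF assms(1,2)])
qed

lemma threshold_gap:
  fixes u v n B :: real and k D :: nat
  assumes v: "0 < v" "v < u" and k: "0 < k" and D: "0 < D"
    and B: "real k * real D * real k \<le> B"
    and n: "4 * u / (real k * v\<^sup>2) * B < n"
  shows "0 < v * n" and "real k * real D \<le> u * n"
    and "real k * real D * (2 * (u * n) + real k * real D) < (v * n)\<^sup>2"
proof -
  have "real k * (4 * u * real k * real D) \<le> 4 * u * B"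
    using v B by (simp add: algebra_simps)
  also have "\<dots> < real k * (n * v\<^sup>2)"
    using n v k by (simp add: field_simps)
  finally have nv: "4 * u * real k * real D < n * v\<^sup>2"
    using k by simp
  then have n_pos: "0 < n"
    using v k D by (smt (verit) mult_nonpos_nonneg mult_pos_pos of_nat_0_less_iff zero_le_power2)
  then show "0 < v * n"
    using v by simp
  have "n * v\<^sup>2 < n * u\<^sup>2"
    using n_pos v by (intro mult_strict_left_mono power_strict_mono) auto
  then have "u * (4 * real k * real D) < u * (u * n)"
    using nv by (simp add: algebra_simps power2_eq_square)
  then have un: "4 * (real k * real D) < u * n"
    using v by simp
  then show "real k * real D \<le> u * n"
    using mult_nonneg_nonneg[of "real k" "real D"] by linarith
  have "2 * (u * n) + real k * real D < 4 * (u * n)"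
    using un mult_nonneg_nonneg[of "real k" "real D"] by linarith
  then have "real k * real D * (2 * (u * n) + real k * real D) < real k * real D * (4 * (u * n))"
    by (rule mult_strict_left_mono) (use k D in simp)
  also have "\<dots> = n * (4 * u * real k * real D)"
    by (simp add: algebra_simps)
  also have "\<dots> < n * (n * v\<^sup>2)"
    using nv n_pos by (rule mult_strict_left_mono)
  finally show "real k * real D * (2 * (u * n) + real k * real D) < (v * n)\<^sup>2"
    by (simp add: power2_eq_square algebra_simps)
qed

lemma nat_centre_radius:
  fixes x y :: real and N0 Np Nm :: int
  assumes y: "0 < y" "y < x" and N: "x = of_int N0" "x + y = of_int Np" "x - y = of_int Nm"
  obtains m r :: nat where "x = real m" "y = real r" "r < m"
    "N0 = int m" "Np = int (m + r)" "Nm = int (m - r)"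
proof
  have "real_of_int (Np - N0) = y" "real_of_int (N0 - Nm) = y" "0 < real_of_int N0"
    using N y by simp_all
  then have N_diff: "Np - N0 = N0 - Nm" "0 < Np - N0" "0 < N0"
    using y of_int_eq_iff of_int_0_less_iff by metis+
  show "x = real (nat N0)" "y = real (nat (Np - N0))"
    using N y N_diff by simp_all
  then show "nat (Np - N0) < nat N0"
    using y by linarith
  then show "N0 = int (nat N0)" "Np = int (nat N0 + nat (Np - N0))"
    "Nm = int (nat N0 - nat (Np - N0))"
    using N_diff by (simp_all add: of_nat_diff)
qed

theorem corollary3p3:
  fixes a :: "nat \<Rightarrow> nat" and u v n :: real and k :: nat
    and N0 Np Nm :: int
  assumes pos: "\<And>i. 1 \<le> i \<Longrightarrow> 0 < a i"
    and incr: "\<And>i j. 1 \<le> i \<Longrightarrow> i \<le> j \<Longrightarrow> a i \<le> a j"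
    and uv: "0 < v" "v < u"
    and k2: "2 \<le> k"
    and gcd1: "Gcd (a ` {1..k}) = 1"
    and nbig: "n > 4 * u / (real k * v ^ 2) *
                 (\<Prod>i\<in>{1..k}. 1 + real i * real (Lcm (a ` {1..k})) * real k)"
    and int0: "u * n = of_int N0"
    and intp: "u * n + v * n = of_int Np"
    and intm: "u * n - v * n = of_int Nm"
  shows "(pA a N0 k) ^ 2 > pA a Np k * pA a Nm k"
proof -
  interpret partition_weights a k
    using pos gcd1 k2 by unfold_locales auto
  have k: "0 < k"
    using k2 by simp
  have "real k * real D * real k \<le> (\<Prod>i\<in>{1..k}. 1 + real i * real D * real k)"
    using factor_le_prod[of "{1..k}" k "\<lambda>i. 1 + real i * real D * real k"] k by simp
  note bounds = threshold_gap[OF uv k D_pos this nbig[folded D_def]]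
  have "v * n < u * n"
    using uv bounds(1) by (simp add: zero_less_mult_iff)
  then obtain m r where m: "u * n = real m" and r: "v * n = real r" and "r < m"
    and N: "N0 = int m" "Np = int (m + r)" "Nm = int (m - r)"
    using nat_centre_radius[OF bounds(1) _ int0 intp intm] by blast
  have "k * D * (2 * m + k * D) < r\<^sup>2"
    using bounds(3) unfolding m r of_nat_less_iff[where 'a = real, symmetric] by simp
  moreover have "0 < r" "k * D \<le> m"
    using bounds(1,2) unfolding m r of_nat_le_iff[where 'a = real, symmetric] by simp_all
  ultimately show ?thesis
    using partition_fps_nth_strict_log_concave[OF k2 _ \<open>r < m\<close>]
    unfolding N pA_int_eq_partition_fps_nth by simp
qed

end
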